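(* Let $(z_n)_{n\ge0}$ be a homogeneous Markov chain on $\mathbb{Z}_+^k$ satisfying assumptions (A1) and (A2) below, with associated maps $p_w$ and distribution process $(x_n)$. Let $K\subset S_k$ be compact. If $$\lambda=\inf_{x\in K}\sum_w p_w(x)\,\alpha(w)>0,$$ then almost surely on the event $\{L(\{x_n\}_{n\ge0})\subset K\}\cap\{\lim_{n\to\infty}|z_n|=\infty\}$ we have $\liminf_{n\to\infty}\frac{|z_n|}{n}\ge\lambda$.
   Context: Fix integers $k\ge1$, $m\ge1$. For $w\in\mathbb{Z}^k$, $|w|=\sum_i|w^i|$, $\alpha(w)=\sum_iw^i$; sums over $w$ range over $w\in\mathbb{Z}^k$ with $|w|\le m$. $\mathbb{Z}_+^k=\{z\in\mathbb{Z}^k:z^i\ge0\}$, $S_k=\{x\in\mathbb{R}^k:x^i\ge0,\sum_ix^i=1\}$. $(z_n)$ has transition kernel $\Pi(z,z')=P[z_{n+1}=z'\mid z_n=z]$; $x_n=z_n/|z_n|$ if $z_n\ne0$, else $x_n=0$. (A1) $|z_{n+1}-z_n|\le m$ for all $n$. (A2) There exist Lipschitz maps $p_w:S_k\to[0,1]$ ($|w|\le m$) and $a>0$ with $|p_w(z/|z|)-\Pi(z,z+w)|\le a/|z|$ for all nonzero $z\in\mathbb{Z}_+^k$, $|w|\le m$. $L(\{x_n\})$ is the set of limit points of $(x_n)$. *)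

theory Defs
  imports "HOL-Probability.Probability"
begin

text \<open>The lattice \<open>\<int>\<^sup>k\<close> is modelled as \<open>int ^ 'k\<close> for a finite index type \<open>'k\<close> (so \<open>k = CARD('k) \<ge> 1\<close>).\<close>

definition l1 :: "int ^ 'k::finite \<Rightarrow> int" where
  "l1 w = (\<Sum>i\<in>UNIV. \<bar>w $ i\<bar>)"

definition alpha :: "int ^ 'k::finite \<Rightarrow> int" where
  "alpha w = (\<Sum>i\<in>UNIV. w $ i)"

definition Zplus :: "(int ^ 'k::finite) set" where
  "Zplus = {z. \<forall>i. 0 \<le> z $ i}"

definition Sk :: "(real ^ 'k::finite) set" where
  "Sk = {x. (\<forall>i. 0 \<le> x $ i) \<and> (\<Sum>i\<in>UNIV. x $ i) = 1}"

definition steps :: "nat \<Rightarrow> (int ^ 'k::finite) set" where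
  "steps m = {w. l1 w \<le> int m}"

definition distr :: "int ^ 'k::finite \<Rightarrow> real ^ 'k" where
  "distr z = (if z = 0 then 0 else (\<chi> i. real_of_int (z $ i) / real_of_int (l1 z)))"

definition limit_points :: "(nat \<Rightarrow> 'a::topological_space) \<Rightarrow> 'a set" where
  "limit_points x = {l. \<exists>r. strict_mono r \<and> (x \<circ> r) \<longlonglongrightarrow> l}"

text \<open>\<open>z\<close> is a homogeneous Markov chain on the countable state space with transition
  kernel \<open>\<Pi>\<close> (\<open>\<Pi>(z,z') = pmf (Pk z) z'\<close>): elementary Markov property.\<close>
definition markov_chain :: "'a measure \<Rightarrow> (nat \<Rightarrow> 'a \<Rightarrow> 's) \<Rightarrow> ('s \<Rightarrow> 's pmf) \<Rightarrow> bool" where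
  "markov_chain M z Pk \<longleftrightarrow> prob_space M \<and>
     (\<forall>n. z n \<in> measurable M (count_space UNIV)) \<and>
     (\<forall>n (h :: nat \<Rightarrow> 's) y.
        measure M {\<omega>\<in>space M. (\<forall>i\<le>n. z i \<omega> = h i) \<and> z (Suc n) \<omega> = y}
        = pmf (Pk (h n)) y * measure M {\<omega>\<in>space M. \<forall>i\<le>n. z i \<omega> = h i})"

end

theory Submission
  imports Defs
begin

(* Almost surely the chain stays in Z_+^k, where |z| = alpha z, so the increments of |z_n|
   split into a predictable part, the drift sum_w Pi(z_n, z_n + w) alpha(w), and a bounded
   innovation orthogonal to every function of the past.  The fourth-moment estimate
   E S_n^4 = O(n^2) for the innovation sums S_n makes sum_n E (S_n/n)^4 finite, hence
   S_n/n -> 0 almost surely.  On the event considered |z_n| -> infinity, so by (A2) the drift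
   at z_n is within O(1/|z_n|) of phi(x_n) = sum_w p_w(x_n) alpha(w); as the limit points of
   x_n lie in the compact set K and phi is continuous, phi(x_n) eventually exceeds
   lambda - e.  Averaging the drifts gives liminf |z_n|/n >= lambda. *)

section \<open>Strong law for bounded orthogonal increments\<close>

lemma fourth_power_add_le:
  fixes s d c n :: real
  assumes d: "\<bar>d\<bar> \<le> c" and "\<bar>s\<bar> \<le> n * c" and "0 \<le> c"
  shows "(s + d) ^ 4 \<le> s ^ 4 + 4 * (s ^ 3 * d) + 6 * c\<^sup>2 * s\<^sup>2 + 4 * n * c ^ 4 + c ^ 4"
proof -
  have expand: "(s + d) ^ 4 = s ^ 4 + 4 * (s ^ 3 * d) + 6 * (s\<^sup>2 * d\<^sup>2) + 4 * (s * d ^ 3) + d ^ 4"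
    by algebra
  have "d\<^sup>2 \<le> c\<^sup>2"
    using power_mono[OF d abs_ge_zero, of 2] by simp
  then have square_term: "s\<^sup>2 * d\<^sup>2 \<le> c\<^sup>2 * s\<^sup>2"
    by (simp add: mult.commute mult_right_mono)
  have "\<bar>s * d ^ 3\<bar> \<le> (n * c) * c ^ 3"
    unfolding abs_mult power_abs using assms by (intro mult_mono power_mono) auto
  then have cubic_term: "s * d ^ 3 \<le> n * c ^ 4"
    by (simp add: power_numeral_reduce)
  have "d ^ 4 \<le> c ^ 4"
    using d power_mono[of "\<bar>d\<bar>" c 4] by (simp add: power_abs)
  with expand square_term cubic_term show ?thesis
    by simp
qed

(* Bounded increments orthogonal to every power of the preceding partial sum, e.g. bounded
   martingale differences: exactly what the fourth-moment proof of the strong law uses. *)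
locale orthogonal_increments = prob_space +
  fixes D :: "nat \<Rightarrow> 'a \<Rightarrow> real" and c :: real
  assumes increment_measurable [measurable]: "\<And>n. D n \<in> borel_measurable M"
    and increment_bounded: "\<And>n \<omega>. \<bar>D n \<omega>\<bar> \<le> c"
    and increment_orthogonal: "\<And>n j. (\<integral>\<omega>. (\<Sum>k<n. D k \<omega>) ^ j * D n \<omega> \<partial>M) = 0"
begin

lemma increment_bound_nonneg: "0 \<le> c"
  using increment_bounded[of 0 undefined] by linarith

lemma partial_sum_bounded: "\<bar>\<Sum>k<n. D k \<omega>\<bar> \<le> n * c"
  using order_trans[OF sum_abs sum_bounded_above[of "{..<n}" "\<lambda>k. \<bar>D k \<omega>\<bar>" c]]
  by (simp add: increment_bounded)

lemma integrable_partial_sum_power: "integrable M (\<lambda>\<omega>. (\<Sum>k<n. D k \<omega>) ^ j)"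
  by (intro integrable_const_bound[where B="(n * c) ^ j"])
    (simp_all add: power_abs power_mono partial_sum_bounded)

lemma integrable_partial_sum_power_mult_increment:
  "integrable M (\<lambda>\<omega>. (\<Sum>k<n. D k \<omega>) ^ j * D n \<omega>)"
  by (intro integrable_const_bound[where B="(n * c) ^ j * c"])
    (simp_all add: abs_mult power_abs mult_mono power_mono partial_sum_bounded
      increment_bounded increment_bound_nonneg)

lemma second_moment_partial_sum: "(\<integral>\<omega>. (\<Sum>k<n. D k \<omega>)\<^sup>2 \<partial>M) \<le> n * c\<^sup>2"
proof (induction n)
  case 0
  then show ?case by simp
next
  case (Suc n)
  let ?S = "\<lambda>\<omega>. \<Sum>k<n. D k \<omega>"
  have increment_square: "(D n \<omega>)\<^sup>2 \<le> c\<^sup>2" for \<omega>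
    using power_mono[OF increment_bounded abs_ge_zero, of n \<omega> 2] by simp
  have integrable_increment_square: "integrable M (\<lambda>\<omega>. (D n \<omega>)\<^sup>2)"
    by (intro integrable_const_bound[where B="c\<^sup>2"]) (simp_all add: increment_square)
  have "(\<integral>\<omega>. (D n \<omega>)\<^sup>2 \<partial>M) \<le> (\<integral>\<omega>. c\<^sup>2 \<partial>M)"
    by (intro integral_mono integrable_increment_square increment_square) simp
  then have second_moment_increment: "(\<integral>\<omega>. (D n \<omega>)\<^sup>2 \<partial>M) \<le> c\<^sup>2"
    by (simp add: prob_space)
  have "(\<integral>\<omega>. (\<Sum>k<Suc n. D k \<omega>)\<^sup>2 \<partial>M)
      = (\<integral>\<omega>. (?S \<omega>)\<^sup>2 + 2 * (?S \<omega> * D n \<omega>) + (D n \<omega>)\<^sup>2 \<partial>M)"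
    by (simp add: power2_sum algebra_simps)
  also have "\<dots> = (\<integral>\<omega>. (?S \<omega>)\<^sup>2 \<partial>M) + 2 * (\<integral>\<omega>. ?S \<omega> * D n \<omega> \<partial>M)
      + (\<integral>\<omega>. (D n \<omega>)\<^sup>2 \<partial>M)"
    using integrable_partial_sum_power[of n 2] integrable_partial_sum_power_mult_increment[of n 1]
      integrable_increment_square
    by simp
  also have "\<dots> \<le> n * c\<^sup>2 + 0 + c\<^sup>2"
    using Suc.IH increment_orthogonal[of n 1] second_moment_increment by (intro add_mono) simp_all
  finally show ?case
    by (simp add: algebra_simps)
qed

lemma fourth_moment_partial_sum: "(\<integral>\<omega>. (\<Sum>k<n. D k \<omega>) ^ 4 \<partial>M) \<le> 11 * c ^ 4 * n\<^sup>2"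
proof (induction n)
  case 0
  then show ?case by simp
next
  case (Suc n)
  let ?S = "\<lambda>\<omega>. \<Sum>k<n. D k \<omega>"
  let ?bound = "\<lambda>\<omega>. ?S \<omega> ^ 4 + 4 * (?S \<omega> ^ 3 * D n \<omega>) + 6 * c\<^sup>2 * (?S \<omega>)\<^sup>2
    + 4 * n * c ^ 4 + c ^ 4"
  have integrable_bound: "integrable M ?bound"
    using integrable_partial_sum_power integrable_partial_sum_power_mult_increment by simp
  have "(\<integral>\<omega>. (\<Sum>k<Suc n. D k \<omega>) ^ 4 \<partial>M) \<le> (\<integral>\<omega>. ?bound \<omega> \<partial>M)"
    by (intro integral_mono integrable_partial_sum_power integrable_bound)
      (simp_all add: fourth_power_add_le increment_bounded partial_sum_bounded increment_bound_nonneg)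
  also have "\<dots> = (\<integral>\<omega>. ?S \<omega> ^ 4 \<partial>M) + 4 * (\<integral>\<omega>. ?S \<omega> ^ 3 * D n \<omega> \<partial>M)
      + 6 * c\<^sup>2 * (\<integral>\<omega>. (?S \<omega>)\<^sup>2 \<partial>M) + 4 * n * c ^ 4 + c ^ 4"
    using integrable_partial_sum_power integrable_partial_sum_power_mult_increment
    by (simp add: prob_space)
  also have "\<dots> \<le> 11 * c ^ 4 * n\<^sup>2 + 0 + 6 * c\<^sup>2 * (n * c\<^sup>2) + 4 * n * c ^ 4 + c ^ 4"
    using Suc.IH increment_orthogonal second_moment_partial_sum
    by (intro add_mono mult_left_mono) simp_all
  also have "\<dots> \<le> 11 * c ^ 4 * (Suc n)\<^sup>2"
    using increment_bound_nonneg by (simp add: power2_eq_square power_numeral_reduce algebra_simps)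
  finally show ?case .
qed

lemma fourth_moment_average:
  "(\<integral>\<omega>. ((\<Sum>k<n. D k \<omega>) / n) ^ 4 \<partial>M) \<le> 11 * c ^ 4 / (real n)\<^sup>2"
proof (cases "n = 0")
  case False
  have "(\<integral>\<omega>. ((\<Sum>k<n. D k \<omega>) / n) ^ 4 \<partial>M) = (\<integral>\<omega>. (\<Sum>k<n. D k \<omega>) ^ 4 \<partial>M) / real n ^ 4"
    by (simp add: power_divide)
  also have "\<dots> \<le> 11 * c ^ 4 * (real n)\<^sup>2 / real n ^ 4"
    using fourth_moment_partial_sum by (intro divide_right_mono) simp_all
  also have "\<dots> = 11 * c ^ 4 / (real n)\<^sup>2"
    using False by (simp add: field_simps power_numeral_reduce)
  finally show ?thesis .
qed simp

lemma AE_summable_average_fourth_power: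
  "AE \<omega> in M. summable (\<lambda>n. ((\<Sum>k<n. D k \<omega>) / n) ^ 4)"
proof -
  let ?T = "\<lambda>n \<omega>. ((\<Sum>k<n. D k \<omega>) / n) ^ 4"
  have integrable_T: "integrable M (?T n)" for n
    using integrable_partial_sum_power[of n 4] by (simp add: power_divide)
  have "(\<integral>\<^sup>+\<omega>. (\<Sum>n. ennreal (?T n \<omega>)) \<partial>M) = (\<Sum>n. \<integral>\<^sup>+\<omega>. ennreal (?T n \<omega>) \<partial>M)"
    by (rule nn_integral_suminf) measurable
  also have "\<dots> = (\<Sum>n. ennreal (\<integral>\<omega>. ?T n \<omega> \<partial>M))"
    by (intro suminf_cong nn_integral_eq_integral integrable_T) simp
  also have "\<dots> \<le> (\<Sum>n. ennreal (11 * c ^ 4 / (real n)\<^sup>2))"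
    by (intro suminf_le summableI ennreal_leI fourth_moment_average)
  also have "\<dots> = ennreal (\<Sum>n. 11 * c ^ 4 / (real n)\<^sup>2)"
    using inverse_power_summable[of 2, where 'a=real]
    by (intro suminf_ennreal2) (simp_all add: divide_inverse summable_mult)
  finally have "(\<integral>\<^sup>+\<omega>. (\<Sum>n. ennreal (?T n \<omega>)) \<partial>M) \<noteq> \<infinity>"
    by (auto simp: top_unique)
  then have "AE \<omega> in M. (\<Sum>n. ennreal (?T n \<omega>)) \<noteq> \<infinity>"
    by (intro nn_integral_PInf_AE) measurable
  then show ?thesis
    by eventually_elim (simp add: summable_suminf_not_top)
qed

theorem AE_average_tendsto_zero: "AE \<omega> in M. (\<lambda>n. (\<Sum>k<n. D k \<omega>) / n) \<longlonglongrightarrow> 0"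
  using AE_summable_average_fourth_power
proof eventually_elim
  case (elim \<omega>)
  then have "(\<lambda>n. ((\<Sum>k<n. D k \<omega>) / n) ^ 4) \<longlonglongrightarrow> 0"
    by (rule summable_LIMSEQ_zero)
  then show ?case
    by simp
qed

end

section \<open>Markov chains on a countable state space\<close>

lemma integral_indicator_countable_valued:
  fixes X :: "'a \<Rightarrow> 'b::countable" and F :: "'b \<Rightarrow> real"
  assumes "finite_measure M" and X: "X \<in> measurable M (count_space UNIV)" and B: "B \<in> sets M"
  shows "(\<integral>\<omega>. F (X \<omega>) * indicator B \<omega> \<partial>M)
       = (\<integral>l. measure M (X -` {l} \<inter> space M \<inter> B) * F l \<partial>count_space UNIV)"
proof -
  interpret finite_measure M by fact
  let ?MB = "density M (indicator B :: 'a \<Rightarrow> real)"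
  let ?\<mu> = "\<lambda>l. measure M (X -` {l} \<inter> space M \<inter> B)"
  have X_MB: "X \<in> measurable ?MB (count_space UNIV)"
    using X by simp
  have distr_eq: "Measure_Space.distr ?MB (count_space UNIV) X = density (count_space UNIV) ?\<mu>"
  proof (rule measure_eqI_countable[where A=UNIV])
    fix l :: 'b
    have fibre: "X -` {l} \<inter> space M \<in> sets M"
      using X by (auto simp: measurable_count_space_eq2_countable)
    have "emeasure (Measure_Space.distr ?MB (count_space UNIV) X) {l}
        = (\<integral>\<^sup>+\<omega>. ennreal (indicator B \<omega>) * indicator (X -` {l} \<inter> space M) \<omega> \<partial>M)"
      using X_MB fibre B by (simp add: emeasure_distr emeasure_density)
    also have "\<dots> = (\<integral>\<^sup>+\<omega>. indicator (X -` {l} \<inter> space M \<inter> B) \<omega> \<partial>M)"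
      by (intro nn_integral_cong) (auto split: split_indicator)
    also have "\<dots> = emeasure M (X -` {l} \<inter> space M \<inter> B)"
      using fibre B by (intro nn_integral_indicator) auto
    also have "\<dots> = emeasure (density (count_space UNIV) ?\<mu>) {l}"
      by (simp add: emeasure_eq_measure emeasure_density nn_integral_count_space_indicator)
    finally show "emeasure (Measure_Space.distr ?MB (count_space UNIV) X) {l}
        = emeasure (density (count_space UNIV) ?\<mu>) {l}" .
  qed auto
  have "(\<integral>\<omega>. F (X \<omega>) * indicator B \<omega> \<partial>M) = integral\<^sup>L ?MB (\<lambda>\<omega>. F (X \<omega>))"
    using B X by (subst integral_density) (auto simp: mult.commute)
  also have "\<dots> = integral\<^sup>L (Measure_Space.distr ?MB (count_space UNIV) X) F"
    using X_MB by (subst integral_distr) auto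
  also have "\<dots> = (\<integral>l. ?\<mu> l * F l \<partial>count_space UNIV)"
    by (simp add: distr_eq integral_density)
  finally show ?thesis .
qed

definition history :: "(nat \<Rightarrow> 'a \<Rightarrow> 's) \<Rightarrow> nat \<Rightarrow> 'a \<Rightarrow> 's list" where
  "history z n \<omega> = map (\<lambda>i. z i \<omega>) [0..<Suc n]"

lemma length_history [simp]: "length (history z n \<omega>) = Suc n"
  by (simp add: history_def)

lemma history_nth [simp]: "i \<le> n \<Longrightarrow> history z n \<omega> ! i = z i \<omega>"
  unfolding history_def by (simp del: upt_Suc add: nth_map_upt)

lemma last_history [simp]: "last (history z n \<omega>) = z n \<omega>"
  by (simp add: history_def)

lemma history_eq_iff:
  "length l = Suc n \<Longrightarrow> history z n \<omega> = l \<longleftrightarrow> (\<forall>i\<le>n. z i \<omega> = l ! i)"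
  by (auto simp: list_eq_iff_nth_eq)

lemma measurable_history [measurable]:
  fixes z :: "nat \<Rightarrow> 'a \<Rightarrow> 's::countable"
  assumes [measurable]: "\<And>n. z n \<in> measurable M (count_space UNIV)"
  shows "history z n \<in> measurable M (count_space UNIV)"
proof (induction n)
  case 0
  then show ?case by (simp add: history_def)
next
  case (Suc n)
  have "history z (Suc n) = (\<lambda>\<omega>. history z n \<omega> @ [z (Suc n) \<omega>])"
    by (simp add: history_def fun_eq_iff)
  with Suc show ?case
    by simp
qed

context
  fixes M :: "'a measure" and z :: "nat \<Rightarrow> 'a \<Rightarrow> 's::countable" and Pk :: "'s \<Rightarrow> 's pmf"
  assumes chain: "markov_chain M z Pk"
begin

lemma markov_chain_prob_space: "prob_space M"
  using chain unfolding markov_chain_def by (rule conjunct1)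

lemma markov_chain_measurable: "z n \<in> measurable M (count_space UNIV)"
  using chain unfolding markov_chain_def by blast

lemma markov_chain_cylinder:
  "measure M {\<omega>\<in>space M. (\<forall>i\<le>n. z i \<omega> = h i) \<and> z (Suc n) \<omega> = y}
    = pmf (Pk (h n)) y * measure M {\<omega>\<in>space M. \<forall>i\<le>n. z i \<omega> = h i}"
  using chain unfolding markov_chain_def by blast

lemma markov_chain_integral_history_step:
  fixes \<Phi> :: "'s list \<Rightarrow> real" and t :: "'s \<Rightarrow> 's"
  shows "(\<integral>\<omega>. \<Phi> (history z n \<omega>) * indicator {\<omega>\<in>space M. z (Suc n) \<omega> = t (z n \<omega>)} \<omega> \<partial>M)
       = (\<integral>\<omega>. \<Phi> (history z n \<omega>) * pmf (Pk (z n \<omega>)) (t (z n \<omega>)) \<partial>M)"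
proof -
  interpret prob_space M
    by (rule markov_chain_prob_space)
  note markov_chain_measurable [measurable]
  let ?B = "{\<omega>\<in>space M. z (Suc n) \<omega> = t (z n \<omega>)}"
  let ?H = "history z n"
  have "?B \<in> sets M"
    by measurable
  then have "(\<integral>\<omega>. \<Phi> (?H \<omega>) * indicator ?B \<omega> \<partial>M)
       = (\<integral>l. measure M (?H -` {l} \<inter> space M \<inter> ?B) * \<Phi> l \<partial>count_space UNIV)"
    by (intro integral_indicator_countable_valued) simp_all
  also have "\<dots> = (\<integral>l. measure M (?H -` {l} \<inter> space M \<inter> space M)
      * (\<Phi> l * pmf (Pk (last l)) (t (last l))) \<partial>count_space UNIV)"
  proof (rule Bochner_Integration.integral_cong[OF refl])
    fix l :: "'s list"
    show "measure M (?H -` {l} \<inter> space M \<inter> ?B) * \<Phi> l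
        = measure M (?H -` {l} \<inter> space M \<inter> space M) * (\<Phi> l * pmf (Pk (last l)) (t (last l)))"
    proof (cases "length l = Suc n")
      case True
      then have "last l = l ! n"
        by (subst last_conv_nth) auto
      moreover have "?H -` {l} \<inter> space M \<inter> ?B
          = {\<omega>\<in>space M. (\<forall>i\<le>n. z i \<omega> = l ! i) \<and> z (Suc n) \<omega> = t (l ! n)}"
        using True by (auto simp: history_eq_iff)
      moreover have "?H -` {l} \<inter> space M \<inter> space M = {\<omega>\<in>space M. \<forall>i\<le>n. z i \<omega> = l ! i}"
        using True by (auto simp: history_eq_iff)
      ultimately show ?thesis
        by (simp add: markov_chain_cylinder)
    next
      case False
      then have "?H -` {l} = {}"
        by auto
      then show ?thesis
        by simp
    qed
  qed
  also have "\<dots> = (\<integral>\<omega>. \<Phi> (?H \<omega>) * pmf (Pk (last (?H \<omega>))) (t (last (?H \<omega>))) * indicator (space M) \<omega> \<partial>M)"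
    by (intro integral_indicator_countable_valued[symmetric]) simp_all
  also have "\<dots> = (\<integral>\<omega>. \<Phi> (?H \<omega>) * pmf (Pk (z n \<omega>)) (t (z n \<omega>)) \<partial>M)"
    by (intro Bochner_Integration.integral_cong) auto
  finally show ?thesis .
qed

end

section \<open>Limit points and averages\<close>

lemma eventually_less_of_limit_points:
  fixes x :: "nat \<Rightarrow> 'b::metric_space" and \<phi> :: "'b \<Rightarrow> real"
  assumes S: "compact S" "continuous_on S \<phi>" "eventually (\<lambda>k. x k \<in> S) sequentially"
    and K: "limit_points x \<subseteq> K" "\<And>y. y \<in> K \<Longrightarrow> lam \<le> \<phi> y"
    and "e > 0"
  shows "eventually (\<lambda>k. lam - e < \<phi> (x k)) sequentially"
proof (rule ccontr)
  assume "\<not> ?thesis"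
  then have "frequently (\<lambda>k. x k \<in> S \<and> \<phi> (x k) \<le> lam - e) sequentially"
    using S(3) by (auto simp: not_eventually not_less elim: frequently_rev_mp eventually_mono)
  then have "infinite {k. x k \<in> S \<and> \<phi> (x k) \<le> lam - e}"
    by (simp add: frequently_cofinite[symmetric] cofinite_eq_sequentially)
  then obtain r :: "nat \<Rightarrow> nat" where r: "strict_mono r" "\<And>n. x (r n) \<in> S \<and> \<phi> (x (r n)) \<le> lam - e"
    using infinite_enumerate by blast
  obtain l r' where l: "l \<in> S" "strict_mono r'" "((x \<circ> r) \<circ> r') \<longlonglongrightarrow> l"
    using compact_imp_seq_compact[OF S(1)] r(2) unfolding seq_compact_def by (metis comp_apply)
  have "l \<in> limit_points x"
    unfolding limit_points_def using strict_mono_o[OF r(1) l(2)] l(3) by (auto simp: o_assoc)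
  then have "lam \<le> \<phi> l"
    using K by blast
  have "(\<lambda>n. \<phi> (((x \<circ> r) \<circ> r') n)) \<longlonglongrightarrow> \<phi> l"
    using S(2) l(3) l(1) by (rule continuous_on_tendsto_compose) (use r in auto)
  then have "\<phi> l \<le> lam - e"
    by (rule LIMSEQ_le_const2) (use r in auto)
  with \<open>lam \<le> \<phi> l\<close> \<open>e > 0\<close> show False
    by simp
qed

lemma eventually_average_greater:
  fixes g :: "nat \<Rightarrow> real"
  assumes g: "\<forall>e>0. eventually (\<lambda>k. lam - e \<le> g k) sequentially" and "e > 0"
  shows "eventually (\<lambda>n. lam - e < (\<Sum>k<n. g k) / n) sequentially"
proof -
  define d where "d = lam - e / 2"
  have "lam - e < d"
    using \<open>e > 0\<close> by (simp add: d_def)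
  have "eventually (\<lambda>k. d \<le> g k) sequentially"
    using g \<open>e > 0\<close> by (simp add: d_def)
  then obtain N where N: "\<And>k. k \<ge> N \<Longrightarrow> d \<le> g k"
    unfolding eventually_sequentially by blast
  define C where "C = (\<Sum>k<N. g k) - N * d"
  have average_bound: "C / n + d \<le> (\<Sum>k<n. g k) / n" if "n \<ge> max N 1" for n
  proof -
    have "{..<n} = {..<N} \<union> {N..<n}"
      using that by auto
    then have "(\<Sum>k<n. g k) = (\<Sum>k<N. g k) + (\<Sum>k\<in>{N..<n}. g k)"
      by (simp add: sum.union_disjoint ivl_disj_int)
    moreover have "(n - N) * d \<le> (\<Sum>k\<in>{N..<n}. g k)"
      using sum_mono[of "{N..<n}" "\<lambda>_. d" g] N by simp
    ultimately have "C + n * d \<le> (\<Sum>k<n. g k)"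
      using that by (simp add: C_def of_nat_diff algebra_simps)
    moreover have "C / n + d = (C + n * d) / n"
      using that by (simp add: field_simps)
    ultimately show ?thesis
      by (simp add: divide_right_mono)
  qed
  have "(\<lambda>n. C / n + d) \<longlonglongrightarrow> 0 + d"
    by (intro tendsto_intros)
  then have "eventually (\<lambda>n. lam - e < C / n + d) sequentially"
    by (rule order_tendstoD(1)) (simp add: \<open>lam - e < d\<close>)
  moreover have "eventually (\<lambda>n. n \<ge> max N 1) sequentially"
    by (rule eventually_ge_at_top)
  ultimately show ?thesis
    by eventually_elim (simp add: order_less_le_trans[OF _ average_bound])
qed

lemma ereal_le_liminf_average:
  fixes s g :: "nat \<Rightarrow> real"
  assumes s: "(\<lambda>n. s n / n) \<longlonglongrightarrow> 0"
    and g: "\<forall>e>0. eventually (\<lambda>k. lam - e \<le> g k) sequentially"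
  shows "ereal lam \<le> liminf (\<lambda>n. ereal ((x0 + s n + (\<Sum>k<n. g k)) / n))"
  unfolding le_Liminf_iff
proof (intro allI impI)
  fix y assume "y < ereal lam"
  then obtain r where r: "y < ereal r" "r < lam"
    using ereal_dense2 by force
  define e where "e = (lam - r) / 2"
  have "e > 0" and r_eq: "r = lam - 2 * e"
    using r by (simp_all add: e_def field_simps)
  have "(\<lambda>n. x0 / n + s n / n) \<longlonglongrightarrow> 0 + 0"
    by (intro tendsto_intros s)
  then have "eventually (\<lambda>n. - e < x0 / n + s n / n) sequentially"
    by (rule order_tendstoD(1)) (use \<open>e > 0\<close> in simp)
  moreover have "eventually (\<lambda>n. lam - e < (\<Sum>k<n. g k) / n) sequentially"
    using g \<open>e > 0\<close> by (rule eventually_average_greater)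
  ultimately show "eventually (\<lambda>n. y < ereal ((x0 + s n + (\<Sum>k<n. g k)) / n)) sequentially"
  proof eventually_elim
    case (elim n)
    then have "r < (x0 + s n + (\<Sum>k<n. g k)) / n"
      unfolding add_divide_distrib r_eq by linarith
    then show ?case
      using r(1) by (simp add: order_less_trans)
  qed
qed

section \<open>Chains on the integer lattice\<close>

lemma l1_Zplus: "y \<in> Zplus \<Longrightarrow> l1 y = alpha y"
  unfolding l1_def alpha_def Zplus_def by simp

lemma alpha_diff: "alpha (y' - y) = alpha y' - alpha y"
  unfolding alpha_def by (simp add: sum_subtractf)

lemma l1_pos_Zplus:
  assumes "y \<in> Zplus" "y \<noteq> 0"
  shows "l1 y > 0"
proof -
  obtain i where "y $ i \<noteq> 0"
    using assms(2) by (metis vec_eq_iff zero_index)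
  then have "0 < \<bar>y $ i\<bar>"
    by simp
  also have "\<bar>y $ i\<bar> \<le> l1 y"
    unfolding l1_def by (rule member_le_sum) simp_all
  finally show ?thesis .
qed

lemma distr_in_Sk:
  assumes "y \<in> Zplus" "y \<noteq> 0"
  shows "distr y \<in> Sk"
proof -
  have nonneg: "\<And>i. 0 \<le> y $ i"
    using assms(1) unfolding Zplus_def by auto
  have "(\<Sum>i\<in>UNIV. real_of_int (y $ i)) = real_of_int (l1 y)"
    unfolding l1_def using nonneg by simp
  then have "(\<Sum>i\<in>UNIV. real_of_int (y $ i) / real_of_int (l1 y)) = 1"
    using l1_pos_Zplus[OF assms] by (simp add: sum_divide_distrib[symmetric])
  then show ?thesis
    unfolding Sk_def distr_def using assms(2) l1_pos_Zplus[OF assms] nonneg by auto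
qed

lemma compact_Sk: "compact Sk"
  unfolding compact_eq_bounded_closed
proof
  show "bounded Sk"
    unfolding bounded_iff
  proof (intro exI ballI)
    fix x :: "real ^ 'k" assume "x \<in> Sk"
    then have "(\<Sum>i\<in>UNIV. \<bar>x $ i\<bar>) = 1"
      unfolding Sk_def by simp
    then show "norm x \<le> 1"
      using norm_le_l1_cart[of x] by simp
  qed
  have "Sk = (\<Inter>i. {x :: real ^ 'k. 0 \<le> x $ i}) \<inter> {x. (\<Sum>i\<in>UNIV. x $ i) = 1}"
    unfolding Sk_def by auto
  also have "closed \<dots>"
    by (intro closed_Int closed_INT ballI closed_Collect_le closed_Collect_eq continuous_intros)
  finally show "closed Sk" .
qed

lemma finite_steps: "finite (steps m :: (int ^ 'k::finite) set)"
proof -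
  have "steps m \<subseteq> vec_lambda ` (PiE UNIV (\<lambda>_. {- int m..int m}) :: ('k \<Rightarrow> int) set)"
  proof
    fix w :: "int ^ 'k" assume w: "w \<in> steps m"
    have "\<bar>w $ i\<bar> \<le> int m" for i
      using member_le_sum[of i UNIV "\<lambda>i. \<bar>w $ i\<bar>"] w unfolding steps_def l1_def by simp
    then have "vec_nth w \<in> PiE UNIV (\<lambda>_. {- int m..int m})"
      by (auto simp: abs_le_iff minus_le_iff)
    then show "w \<in> vec_lambda ` PiE UNIV (\<lambda>_. {- int m..int m})"
      by (metis image_eqI vec_nth_inverse)
  qed
  then show ?thesis
    by (rule finite_subset) (intro finite_imageI finite_PiE; simp)
qed

locale lattice_markov_chain =
  fixes M :: "'a measure" and z :: "nat \<Rightarrow> 'a \<Rightarrow> int ^ 'k::finite"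
    and Pk :: "int ^ 'k \<Rightarrow> (int ^ 'k) pmf" and W :: "(int ^ 'k) set"
  assumes chain: "markov_chain M z Pk" and finite_W: "finite W"
begin

lemma state_measurable [measurable]: "z n \<in> measurable M (count_space UNIV)"
  by (rule markov_chain_measurable[OF chain])

(* Steps outside W count as 0; almost surely none occurs. *)
definition jump :: "int ^ 'k \<Rightarrow> int ^ 'k \<Rightarrow> real" where
  "jump y y' = (if y' - y \<in> W then real_of_int (alpha (y' - y)) else 0)"

definition drift :: "int ^ 'k \<Rightarrow> real" where
  "drift y = (\<Sum>w\<in>W. pmf (Pk y) (y + w) * real_of_int (alpha w))"

definition innovation :: "nat \<Rightarrow> 'a \<Rightarrow> real" where
  "innovation n \<omega> = jump (z n \<omega>) (z (Suc n) \<omega>) - drift (z n \<omega>)"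

definition jump_bound :: real where
  "jump_bound = (\<Sum>w\<in>W. \<bar>real_of_int (alpha w)\<bar>)"

lemma jump_bounded: "\<bar>jump y y'\<bar> \<le> jump_bound"
  unfolding jump_def jump_bound_def
  using finite_W member_le_sum[of "y' - y" W "\<lambda>w. \<bar>real_of_int (alpha w)\<bar>"]
  by (simp add: sum_nonneg)

lemma drift_bounded: "\<bar>drift y\<bar> \<le> jump_bound"
  unfolding drift_def jump_bound_def
  by (rule order_trans[OF sum_abs], rule sum_mono)
    (auto simp: abs_mult intro!: mult_left_le_one_le pmf_le_1)

lemma innovation_bounded: "\<bar>innovation n \<omega>\<bar> \<le> 2 * jump_bound"
  using jump_bounded[of "z n \<omega>" "z (Suc n) \<omega>"] drift_bounded[of "z n \<omega>"]
  unfolding innovation_def by linarith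

lemma jump_eq_sum_indicator: "jump y y' = (\<Sum>w\<in>W. real_of_int (alpha w) * indicator {y + w} y')"
proof -
  have "(\<Sum>w\<in>W. real_of_int (alpha w) * indicator {y + w} y')
      = (\<Sum>w\<in>W. if y' - y = w then real_of_int (alpha w) else 0)"
    by (intro sum.cong) (auto simp: indicator_def)
  then show ?thesis
    using finite_W by (simp add: jump_def)
qed

lemma integral_history_mult_innovation:
  fixes \<Phi> :: "(int ^ 'k) list \<Rightarrow> real"
  assumes \<Phi>_bounded: "\<And>l. \<bar>\<Phi> l\<bar> \<le> B"
  shows "(\<integral>\<omega>. \<Phi> (history z n \<omega>) * innovation n \<omega> \<partial>M) = 0"
proof -
  interpret prob_space M
    by (rule markov_chain_prob_space[OF chain])
  let ?\<Phi> = "\<lambda>\<omega>. \<Phi> (history z n \<omega>)"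
  let ?B = "\<lambda>w. {\<omega>\<in>space M. z (Suc n) \<omega> = z n \<omega> + w}"
  let ?q = "\<lambda>w \<omega>. pmf (Pk (z n \<omega>)) (z n \<omega> + w)"
  have integrable_\<Phi>: "integrable M (\<lambda>\<omega>. ?\<Phi> \<omega> * f \<omega>)"
    if "f \<in> borel_measurable M" "\<And>\<omega>. \<bar>f \<omega>\<bar> \<le> 1" for f
    using that
    by (intro integrable_const_bound[where B=B] AE_I2)
      (auto simp: abs_mult intro!: order_trans[OF mult_right_le_one_le \<Phi>_bounded])
  have "?B w \<in> sets M" for w
    by measurable
  then have int_indicator: "integrable M (\<lambda>\<omega>. ?\<Phi> \<omega> * indicator (?B w) \<omega>)" for w
    by (intro integrable_\<Phi> borel_measurable_indicator) (auto split: split_indicator)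
  have int_pmf: "integrable M (\<lambda>\<omega>. ?\<Phi> \<omega> * ?q w \<omega>)" for w
    by (rule integrable_\<Phi>) (simp_all add: pmf_le_1)
  have "(\<integral>\<omega>. ?\<Phi> \<omega> * innovation n \<omega> \<partial>M)
      = (\<integral>\<omega>. (\<Sum>w\<in>W. real_of_int (alpha w) * (?\<Phi> \<omega> * indicator (?B w) \<omega> - ?\<Phi> \<omega> * ?q w \<omega>)) \<partial>M)"
    by (intro Bochner_Integration.integral_cong)
      (auto simp: innovation_def drift_def jump_eq_sum_indicator sum_distrib_left
        sum_subtractf algebra_simps indicator_def)
  also have "\<dots> = (\<Sum>w\<in>W. real_of_int (alpha w)
      * ((\<integral>\<omega>. ?\<Phi> \<omega> * indicator (?B w) \<omega> \<partial>M) - (\<integral>\<omega>. ?\<Phi> \<omega> * ?q w \<omega> \<partial>M)))"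
    using int_indicator int_pmf by (simp add: integral_diff)
  also have "\<dots> = 0"
    using markov_chain_integral_history_step[OF chain, of \<Phi> n "\<lambda>y. y + _"] by simp
  finally show ?thesis .
qed

sublocale orthogonal_increments M innovation "2 * jump_bound"
proof (intro orthogonal_increments.intro orthogonal_increments_axioms.intro)
  show "prob_space M"
    by (rule markov_chain_prob_space[OF chain])
  show "innovation n \<in> borel_measurable M" for n
    unfolding innovation_def by measurable
  show "\<bar>innovation n \<omega>\<bar> \<le> 2 * jump_bound" for n \<omega>
    by (rule innovation_bounded)
  show "(\<integral>\<omega>. (\<Sum>k<n. innovation k \<omega>) ^ j * innovation n \<omega> \<partial>M) = 0" for n j
  proof -
    define F where "F l = (\<Sum>k<n. jump (l ! k) (l ! Suc k) - drift (l ! k))" for l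
    have F_history: "(\<Sum>k<n. innovation k \<omega>) = F (history z n \<omega>)" for \<omega>
      unfolding F_def innovation_def by (intro sum.cong) auto
    have "\<bar>jump y y' - drift y\<bar> \<le> 2 * jump_bound" for y y'
      using jump_bounded[of y y'] drift_bounded[of y] by linarith
    then have "\<bar>F l\<bar> \<le> n * (2 * jump_bound)" for l
      unfolding F_def
      using order_trans[OF sum_abs sum_bounded_above[of "{..<n}" _ "2 * jump_bound"]] by simp
    then have "\<bar>F l ^ j\<bar> \<le> (n * (2 * jump_bound)) ^ j" for l
      unfolding power_abs by (intro power_mono) simp_all
    then show ?thesis
      unfolding F_history by (rule integral_history_mult_innovation)
  qed
qed

lemma l1_eq_innovations_plus_drifts:
  assumes Zplus: "\<forall>n. z n \<omega> \<in> Zplus" and steps: "\<forall>n. z (Suc n) \<omega> - z n \<omega> \<in> W"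
  shows "real_of_int (l1 (z n \<omega>))
    = l1 (z 0 \<omega>) + (\<Sum>k<n. innovation k \<omega>) + (\<Sum>k<n. drift (z k \<omega>))"
proof (induction n)
  case 0
  then show ?case by simp
next
  case (Suc n)
  have "l1 (z (Suc n) \<omega>) = l1 (z n \<omega>) + alpha (z (Suc n) \<omega> - z n \<omega>)"
    using Zplus by (simp add: l1_Zplus alpha_diff)
  then have "real_of_int (l1 (z (Suc n) \<omega>)) = l1 (z n \<omega>) + jump (z n \<omega>) (z (Suc n) \<omega>)"
    using steps by (simp add: jump_def)
  with Suc show ?case
    by (simp add: innovation_def)
qed

lemma drift_ge:
  assumes "\<And>w. w \<in> W \<Longrightarrow> \<bar>p w x - pmf (Pk y) (y + w)\<bar> \<le> \<epsilon>"
  shows "(\<Sum>w\<in>W. p w x * real_of_int (alpha w)) - \<epsilon> * jump_bound \<le> drift y"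
proof -
  have "(\<Sum>w\<in>W. p w x * real_of_int (alpha w)) - drift y
      = (\<Sum>w\<in>W. (p w x - pmf (Pk y) (y + w)) * real_of_int (alpha w))"
    by (simp add: drift_def sum_subtractf left_diff_distrib)
  also have "\<dots> \<le> (\<Sum>w\<in>W. \<bar>p w x - pmf (Pk y) (y + w)\<bar> * \<bar>real_of_int (alpha w)\<bar>)"
    by (rule order_trans[OF abs_ge_self sum_abs[THEN order_trans]]) (simp add: abs_mult)
  also have "\<dots> \<le> (\<Sum>w\<in>W. \<epsilon> * \<bar>real_of_int (alpha w)\<bar>)"
    using assms by (intro sum_mono mult_right_mono) simp_all
  finally show ?thesis
    by (simp add: jump_bound_def sum_distrib_left)
qed

lemma eventually_drift_ge:
  fixes p :: "int ^ 'k \<Rightarrow> real ^ 'k \<Rightarrow> real"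
  defines "\<phi> \<equiv> \<lambda>x. \<Sum>w\<in>W. p w x * real_of_int (alpha w)"
  assumes approx: "\<And>y w. y \<in> Zplus \<Longrightarrow> y \<noteq> 0 \<Longrightarrow> w \<in> W \<Longrightarrow>
      \<bar>p w (distr y) - pmf (Pk y) (y + w)\<bar> \<le> a / real_of_int (l1 y)"
    and cont: "continuous_on Sk \<phi>" and lower: "\<And>x. x \<in> K \<Longrightarrow> lam \<le> \<phi> x"
    and Zplus: "\<forall>n. z n \<omega> \<in> Zplus"
    and limit_points: "limit_points (\<lambda>n. distr (z n \<omega>)) \<subseteq> K"
    and unbounded: "filterlim (\<lambda>n. real_of_int (l1 (z n \<omega>))) at_top sequentially"
  shows "\<forall>e>0. eventually (\<lambda>k. lam - e \<le> drift (z k \<omega>)) sequentially"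
proof (intro allI impI)
  fix e :: real assume "e > 0"
  let ?X = "\<lambda>k. real_of_int (l1 (z k \<omega>))"
  have "eventually (\<lambda>k. 1 \<le> ?X k) sequentially"
    using unbounded unfolding filterlim_at_top by blast
  then have nonzero: "eventually (\<lambda>k. z k \<omega> \<noteq> 0) sequentially"
    by eventually_elim (auto simp: l1_def)
  then have "eventually (\<lambda>k. distr (z k \<omega>) \<in> Sk) sequentially"
    by eventually_elim (simp add: distr_in_Sk Zplus)
  then have "eventually (\<lambda>k. lam - e / 2 < \<phi> (distr (z k \<omega>))) sequentially"
    using eventually_less_of_limit_points[OF compact_Sk cont _ limit_points lower, of "e / 2"] \<open>e > 0\<close>
    by simp
  moreover have "((\<lambda>k. a * jump_bound / ?X k) \<longlongrightarrow> 0) sequentially"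
    by (intro tendsto_divide_0[OF tendsto_const] filterlim_at_top_imp_at_infinity unbounded)
  then have "eventually (\<lambda>k. a * jump_bound / ?X k < e / 2) sequentially"
    by (rule order_tendstoD(2)) (simp add: \<open>e > 0\<close>)
  ultimately show "eventually (\<lambda>k. lam - e \<le> drift (z k \<omega>)) sequentially"
    using nonzero
  proof eventually_elim
    case (elim k)
    have "\<phi> (distr (z k \<omega>)) - a / ?X k * jump_bound \<le> drift (z k \<omega>)"
      unfolding \<phi>_def using approx Zplus elim(3) by (intro drift_ge) auto
    moreover have "a / ?X k * jump_bound = a * jump_bound / ?X k"
      by simp
    ultimately show ?case
      using elim(1,2) by linarith
  qed
qed

lemma ereal_le_liminf_l1_average:
  assumes Zplus: "\<forall>n. z n \<omega> \<in> Zplus" and steps: "\<forall>n. z (Suc n) \<omega> - z n \<omega> \<in> W"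
    and innovations: "(\<lambda>n. (\<Sum>k<n. innovation k \<omega>) / n) \<longlonglongrightarrow> 0"
    and drifts: "\<forall>e>0. eventually (\<lambda>k. lam - e \<le> drift (z k \<omega>)) sequentially"
  shows "ereal lam \<le> liminf (\<lambda>n. ereal (real_of_int (l1 (z n \<omega>)) / n))"
proof -
  have "ereal lam \<le> liminf (\<lambda>n. ereal ((l1 (z 0 \<omega>)
      + (\<Sum>k<n. innovation k \<omega>) + (\<Sum>k<n. drift (z k \<omega>))) / n))"
    using innovations drifts by (rule ereal_le_liminf_average)
  moreover have l1_average: "real_of_int (l1 (z n \<omega>)) / n
      = (l1 (z 0 \<omega>) + (\<Sum>k<n. innovation k \<omega>) + (\<Sum>k<n. drift (z k \<omega>))) / n" for n
    using l1_eq_innovations_plus_drifts[OF Zplus steps, of n] by simp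
  ultimately show ?thesis
    by (simp only: l1_average)
qed

end

theorem proposition1:
  fixes M :: "'a measure"
    and z :: "nat \<Rightarrow> 'a \<Rightarrow> int ^ 'k::finite"
    and Pk :: "int ^ 'k \<Rightarrow> (int ^ 'k) pmf"
    and m :: nat
    and p :: "int ^ 'k \<Rightarrow> real ^ 'k \<Rightarrow> real"
    and K :: "(real ^ 'k) set"
  assumes m: "m \<ge> 1"
    and chain: "markov_chain M z Pk"
    and kernel: "\<forall>y\<in>Zplus. set_pmf (Pk y) \<subseteq> Zplus"
    and state: "AE \<omega> in M. \<forall>n. z n \<omega> \<in> Zplus"
    and A1: "AE \<omega> in M. \<forall>n. l1 (z (Suc n) \<omega> - z n \<omega>) \<le> int m"
    and p_range: "\<forall>w\<in>steps m. \<forall>x\<in>Sk. p w x \<in> {0..1}"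
    and p_lip: "\<forall>w\<in>steps m. \<exists>C. C-lipschitz_on Sk (p w)"
    and A2: "\<exists>a>0. \<forall>y\<in>Zplus. y \<noteq> 0 \<longrightarrow> (\<forall>w\<in>steps m.
               \<bar>p w (distr y) - pmf (Pk y) (y + w)\<bar> \<le> a / real_of_int (l1 y))"
    and K: "compact K" "K \<subseteq> Sk"
    and lam: "(INF x\<in>K. \<Sum>w\<in>steps m. p w x * real_of_int (alpha w)) > 0"
  shows "AE \<omega> in M.
           (limit_points (\<lambda>n. distr (z n \<omega>)) \<subseteq> K \<and>
            filterlim (\<lambda>n. real_of_int (l1 (z n \<omega>))) at_top sequentially)
           \<longrightarrow> ereal (INF x\<in>K. \<Sum>w\<in>steps m. p w x * real_of_int (alpha w))
                 \<le> liminf (\<lambda>n. ereal (real_of_int (l1 (z n \<omega>)) / real n))"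
proof -
  interpret lattice_markov_chain M z Pk "steps m"
    using chain finite_steps by unfold_locales
  obtain a where approx: "\<And>y w. y \<in> Zplus \<Longrightarrow> y \<noteq> 0 \<Longrightarrow> w \<in> steps m \<Longrightarrow>
      \<bar>p w (distr y) - pmf (Pk y) (y + w)\<bar> \<le> a / real_of_int (l1 y)"
    using A2 by blast
  let ?\<phi> = "\<lambda>x. \<Sum>w\<in>steps m. p w x * real_of_int (alpha w)"
  have cont: "continuous_on Sk ?\<phi>"
    using p_lip by (intro continuous_on_sum continuous_on_mult_right) (auto intro: lipschitz_on_continuous_on)
  have "bdd_below (?\<phi> ` K)"
    using K by (intro bounded_imp_bdd_below compact_imp_bounded compact_continuous_image
        continuous_on_subset[OF cont])
  then have lower: "\<And>x. x \<in> K \<Longrightarrow> (INF x\<in>K. ?\<phi> x) \<le> ?\<phi> x"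
    by (rule cINF_lower)
  show ?thesis
    using state A1 AE_average_tendsto_zero
  proof eventually_elim
    case (elim \<omega>)
    have "\<forall>n. z (Suc n) \<omega> - z n \<omega> \<in> steps m"
      using elim(2) by (simp add: steps_def)
    with elim eventually_drift_ge[OF approx cont lower elim(1)] show ?case
      by (blast intro: ereal_le_liminf_l1_average)
  qed
qed

end
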